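(* Let $m,k\in\mathbb{Z}$, let $(H,\alpha)$ be a monoidal Hom-bialgebra and $(C,\beta)$ a monoidal Hom-algebra which is a left weak $(H,\alpha)$-Hom-module algebra via $h\otimes c\mapsto h\rightarrow c$ and a left $(H,\alpha)$-Hom-comodule coalgebra with coaction $c\mapsto c_{(-1)}\otimes c_{(0)}$; let $\sigma:H\otimes H\to C$ be a convolution invertible linear map. Let $X=C\otimes H$ with multiplication $(a\otimes h)(b\otimes g)=a[(\alpha^{m}(h_{11})\rightarrow\beta^{-2}(b))\sigma(\alpha^{k+1}(h_{12}),\alpha^{k}(g_{1}))]\otimes\alpha(h_{2}g_{2})$, unit $1_C\otimes1_H$, comultiplication $\Delta(a\otimes h)=a_{1}\otimes\alpha^{m}(a_{2(-1)})\alpha^{-1}(h_{1})\otimes\beta(a_{2(0)})\otimes h_{2}$, counit $\varepsilon(a)\varepsilon(h)$ and structure map $\xi=\beta\otimes\alpha$, and assume $(X,\xi)$ is a monoidal Hom-bialgebra. Define $\varphi^l:H\otimes X\to X$ and $\varphi^r:X\otimes H\to X$ by $$\varphi^{l}(l\otimes(a\otimes h))=(\alpha(l_{11})\rightarrow\beta^{-1}(a))\,\sigma(\alpha^{k+2-m}(l_{12}),\alpha^{k+1}(h_{1}))\otimes\alpha^{1-m}(l_{2})\alpha(h_{2}),$$ $$\varphi^{r}((a\otimes h)\otimes l)=a\,\sigma(\alpha^{k+1}(h_{1}),\alpha^{k+1-m}(l_{1}))\otimes\alpha(h_{2})\alpha^{1-m}(l_{2}).$$ Then $(X,\xi,\varphi^l,\varphi^r)$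 is a weak $(H,\alpha)$ Hom-bimodule, i.e. for all $l,g\in H$, $x\in X$: $\varphi^l(1_H\otimes x)=\xi(x)=\varphi^r(x\otimes1_H)$ and $\varphi^l(\alpha(l)\otimes\varphi^r(x\otimes g))=\varphi^r(\varphi^l(l\otimes x)\otimes\alpha(g))$.
   Context: Field $k$; Sweedler notation. Monoidal Hom-algebra $(A,\beta)$: $\beta(a)(bc)=(ab)\beta(c)$, $\beta(ab)=\beta(a)\beta(b)$, $a1=1a=\beta(a)$, $\beta(1)=1$, $\beta$ a linear automorphism. Monoidal Hom-coalgebra $(C,\gamma)$: $\gamma^{-1}(c_1)\otimes\Delta(c_2)=\Delta(c_1)\otimes\gamma^{-1}(c_2)$, $\Delta\gamma=(\gamma\otimes\gamma)\Delta$, $c_1\varepsilon(c_2)=\gamma^{-1}(c)=\varepsilon(c_1)c_2$, $\varepsilon\gamma=\varepsilon$. Monoidal Hom-bialgebra: both with the same structure map and $\Delta,\varepsilon$ multiplicative and unital. Left weak $(H,\alpha)$-Hom-module algebra: $h\rightarrow(ab)=(h_1\rightarrow a)(h_2\rightarrow b)$, $h\rightarrow1=\varepsilon(h)1$. Left $(H,\alpha)$-Hom-comodule $(M,\mu)$: $\Delta_H(x_{(-1)})\otimes\mu^{-1}(x_{(0)})=\alpha^{-1}(x_{(-1)})\otimes x_{(0)(-1)}\otimes x_{(0)(0)}$, $\rho(\mu(x))=\alpha(x_{(-1)})\otimes\mu(x_{(0)})$, $\varepsilon(x_{(-1)})x_{(0)}=\mu^{-1}(x)$; Hom-comodule coalgebra: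 moreover $b_{(-1)}\otimes b_{(0)1}\otimes b_{(0)2}=b_{1(-1)}b_{2(-1)}\otimes b_{1(0)}\otimes b_{2(0)}$, $\varepsilon(b_{(0)})b_{(-1)}=\varepsilon(b)1_H$. $\sigma$ convolution invertible means there is a linear $\sigma^{-1}:H\otimes H\to C$ with $\sigma(h_1,l_1)\sigma^{-1}(h_2,l_2)=\varepsilon(h)\varepsilon(l)1_C=\sigma^{-1}(h_1,l_1)\sigma(h_2,l_2)$. *)

theory Defs
  imports Complex_Main
begin

text \<open>An element of V1 (x) ... (x) Vn is represented by a list of tuples (a finite sum of
simple tensors).  Two such lists denote the same tensor iff every multilinear form
V1 x ... x Vn -> k takes the same value on them (over a field, multilinear forms
separate the points of a tensor product).  Tuples are nested to the right.\<close>

definition lforms :: "('k::field \<Rightarrow> 'v::ab_group_add \<Rightarrow> 'v) \<Rightarrow> ('v \<Rightarrow> 'k) set" where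
  "lforms s = {f. Vector_Spaces.linear s (*) f}"

definition tforms :: "('a \<Rightarrow> 'k) set \<Rightarrow> ('b \<Rightarrow> 'k) set \<Rightarrow> ('a \<times> 'b \<Rightarrow> 'k::field) set" where
  "tforms FA FB = {f. (\<forall>b. (\<lambda>a. f (a, b)) \<in> FA) \<and> (\<forall>a. (\<lambda>b. f (a, b)) \<in> FB)}"

definition ev :: "('t \<Rightarrow> 'k::comm_monoid_add) \<Rightarrow> 't list \<Rightarrow> 'k" where
  "ev f xs = sum_list (map f xs)"

definition teq :: "('t \<Rightarrow> 'k::comm_monoid_add) set \<Rightarrow> 't list \<Rightarrow> 't list \<Rightarrow> bool" where
  "teq F xs ys \<longleftrightarrow> (\<forall>f\<in>F. ev f xs = ev f ys)"

definition lin_into :: "('k::field \<Rightarrow> 'v::ab_group_add \<Rightarrow> 'v) \<Rightarrow> ('t \<Rightarrow> 'k) set \<Rightarrow> ('v \<Rightarrow> 't list) \<Rightarrow> bool" where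
  "lin_into s F D \<longleftrightarrow> (\<forall>f\<in>F. Vector_Spaces.linear s (*) (\<lambda>x. ev f (D x)))"

definition bilinear_map :: "('k::field \<Rightarrow> 'a::ab_group_add \<Rightarrow> 'a) \<Rightarrow> ('k \<Rightarrow> 'b::ab_group_add \<Rightarrow> 'b)
    \<Rightarrow> ('k \<Rightarrow> 'c::ab_group_add \<Rightarrow> 'c) \<Rightarrow> ('a \<Rightarrow> 'b \<Rightarrow> 'c) \<Rightarrow> bool" where
  "bilinear_map s1 s2 s3 f \<longleftrightarrow>
     (\<forall>b. Vector_Spaces.linear s1 s3 (\<lambda>a. f a b)) \<and> (\<forall>a. Vector_Spaces.linear s2 s3 (f a))"

definition zpow :: "('a \<Rightarrow> 'a) \<Rightarrow> int \<Rightarrow> 'a \<Rightarrow> 'a" where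
  "zpow f n = (if 0 \<le> n then f ^^ nat n else inv f ^^ nat (- n))"

definition mhom_algebra :: "('k::field \<Rightarrow> 'a::ab_group_add \<Rightarrow> 'a) \<Rightarrow> ('a \<Rightarrow> 'a \<Rightarrow> 'a) \<Rightarrow> 'a
    \<Rightarrow> ('a \<Rightarrow> 'a) \<Rightarrow> bool" where
  "mhom_algebra s mul one \<beta> \<longleftrightarrow>
     vector_space s \<and> bilinear_map s s s mul \<and> Vector_Spaces.linear s s \<beta> \<and> bij \<beta> \<and>
     (\<forall>a b c. mul (\<beta> a) (mul b c) = mul (mul a b) (\<beta> c)) \<and>
     (\<forall>a b. \<beta> (mul a b) = mul (\<beta> a) (\<beta> b)) \<and>
     (\<forall>a. mul a one = \<beta> a \<and> mul one a = \<beta> a) \<and> \<beta> one = one"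

definition mhom_coalgebra :: "('k::field \<Rightarrow> 'a::ab_group_add \<Rightarrow> 'a) \<Rightarrow> ('a \<Rightarrow> ('a \<times> 'a) list)
    \<Rightarrow> ('a \<Rightarrow> 'k) \<Rightarrow> ('a \<Rightarrow> 'a) \<Rightarrow> bool" where
  "mhom_coalgebra s D e \<gamma> \<longleftrightarrow>
     vector_space s \<and> lin_into s (tforms (lforms s) (lforms s)) D \<and>
     Vector_Spaces.linear s (*) e \<and> Vector_Spaces.linear s s \<gamma> \<and> bij \<gamma> \<and>
     (\<forall>c. teq (tforms (lforms s) (tforms (lforms s) (lforms s)))
            [(inv \<gamma> x, u, v). (x, y) \<leftarrow> D c, (u, v) \<leftarrow> D y]
            [(u, v, inv \<gamma> y). (x, y) \<leftarrow> D c, (u, v) \<leftarrow> D x]) \<and>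
     (\<forall>c. teq (tforms (lforms s) (lforms s)) (D (\<gamma> c)) [(\<gamma> x, \<gamma> y). (x, y) \<leftarrow> D c]) \<and>
     (\<forall>c. sum_list [s (e y) x. (x, y) \<leftarrow> D c] = inv \<gamma> c) \<and>
     (\<forall>c. sum_list [s (e x) y. (x, y) \<leftarrow> D c] = inv \<gamma> c) \<and>
     (\<forall>c. e (\<gamma> c) = e c)"

definition mhom_bialgebra :: "('k::field \<Rightarrow> 'a::ab_group_add \<Rightarrow> 'a) \<Rightarrow> ('a \<Rightarrow> 'a \<Rightarrow> 'a) \<Rightarrow> 'a
    \<Rightarrow> ('a \<Rightarrow> ('a \<times> 'a) list) \<Rightarrow> ('a \<Rightarrow> 'k) \<Rightarrow> ('a \<Rightarrow> 'a) \<Rightarrow> bool" where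
  "mhom_bialgebra s mul one D e \<alpha> \<longleftrightarrow>
     mhom_algebra s mul one \<alpha> \<and> mhom_coalgebra s D e \<alpha> \<and>
     (\<forall>a b. teq (tforms (lforms s) (lforms s)) (D (mul a b))
              [(mul x u, mul y v). (x, y) \<leftarrow> D a, (u, v) \<leftarrow> D b]) \<and>
     teq (tforms (lforms s) (lforms s)) (D one) [(one, one)] \<and>
     (\<forall>a b. e (mul a b) = e a * e b) \<and> e one = 1"

definition weak_hom_module_algebra :: "('k::field \<Rightarrow> 'h::ab_group_add \<Rightarrow> 'h) \<Rightarrow> ('h \<Rightarrow> ('h \<times> 'h) list)
    \<Rightarrow> ('h \<Rightarrow> 'k) \<Rightarrow> ('k \<Rightarrow> 'c::ab_group_add \<Rightarrow> 'c) \<Rightarrow> ('c \<Rightarrow> 'c \<Rightarrow> 'c) \<Rightarrow> 'c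
    \<Rightarrow> ('h \<Rightarrow> 'c \<Rightarrow> 'c) \<Rightarrow> bool" where
  "weak_hom_module_algebra sH DH eH sC mC oneC act \<longleftrightarrow>
     bilinear_map sH sC sC act \<and>
     (\<forall>h a b. act h (mC a b) = sum_list [mC (act x a) (act y b). (x, y) \<leftarrow> DH h]) \<and>
     (\<forall>h. act h oneC = sC (eH h) oneC)"

definition hom_comodule :: "('k::field \<Rightarrow> 'h::ab_group_add \<Rightarrow> 'h) \<Rightarrow> ('h \<Rightarrow> ('h \<times> 'h) list)
    \<Rightarrow> ('h \<Rightarrow> 'k) \<Rightarrow> ('h \<Rightarrow> 'h) \<Rightarrow> ('k \<Rightarrow> 'c::ab_group_add \<Rightarrow> 'c) \<Rightarrow> ('c \<Rightarrow> 'c)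
    \<Rightarrow> ('c \<Rightarrow> ('h \<times> 'c) list) \<Rightarrow> bool" where
  "hom_comodule sH DH eH \<alpha> sC \<mu> \<rho> \<longleftrightarrow>
     lin_into sC (tforms (lforms sH) (lforms sC)) \<rho> \<and>
     (\<forall>c. teq (tforms (lforms sH) (tforms (lforms sH) (lforms sC)))
            [(u, v, inv \<mu> y). (x, y) \<leftarrow> \<rho> c, (u, v) \<leftarrow> DH x]
            [(inv \<alpha> x, u, v). (x, y) \<leftarrow> \<rho> c, (u, v) \<leftarrow> \<rho> y]) \<and>
     (\<forall>c. teq (tforms (lforms sH) (lforms sC)) (\<rho> (\<mu> c)) [(\<alpha> x, \<mu> y). (x, y) \<leftarrow> \<rho> c]) \<and>
     (\<forall>c. sum_list [sC (eH x) y. (x, y) \<leftarrow> \<rho> c] = inv \<mu> c)"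

definition hom_comodule_coalgebra :: "('k::field \<Rightarrow> 'h::ab_group_add \<Rightarrow> 'h) \<Rightarrow> ('h \<Rightarrow> 'h \<Rightarrow> 'h) \<Rightarrow> 'h
    \<Rightarrow> ('h \<Rightarrow> ('h \<times> 'h) list) \<Rightarrow> ('h \<Rightarrow> 'k) \<Rightarrow> ('h \<Rightarrow> 'h)
    \<Rightarrow> ('k \<Rightarrow> 'c::ab_group_add \<Rightarrow> 'c) \<Rightarrow> ('c \<Rightarrow> ('c \<times> 'c) list) \<Rightarrow> ('c \<Rightarrow> 'k) \<Rightarrow> ('c \<Rightarrow> 'c)
    \<Rightarrow> ('c \<Rightarrow> ('h \<times> 'c) list) \<Rightarrow> bool" where
  "hom_comodule_coalgebra sH mH oneH DH eH \<alpha> sC DC eC \<beta> \<rho> \<longleftrightarrow>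
     mhom_coalgebra sC DC eC \<beta> \<and> hom_comodule sH DH eH \<alpha> sC \<beta> \<rho> \<and>
     (\<forall>b. teq (tforms (lforms sH) (tforms (lforms sC) (lforms sC)))
            [(x, u, v). (x, y) \<leftarrow> \<rho> b, (u, v) \<leftarrow> DC y]
            [(mH x u, y, v). (b1, b2) \<leftarrow> DC b, (x, y) \<leftarrow> \<rho> b1, (u, v) \<leftarrow> \<rho> b2]) \<and>
     (\<forall>b. sum_list [sH (eC y) x. (x, y) \<leftarrow> \<rho> b] = sH (eC b) oneH)"

definition conv_invertible :: "('k::field \<Rightarrow> 'h::ab_group_add \<Rightarrow> 'h) \<Rightarrow> ('h \<Rightarrow> ('h \<times> 'h) list)
    \<Rightarrow> ('h \<Rightarrow> 'k) \<Rightarrow> ('k \<Rightarrow> 'c::ab_group_add \<Rightarrow> 'c) \<Rightarrow> ('c \<Rightarrow> 'c \<Rightarrow> 'c) \<Rightarrow> 'c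
    \<Rightarrow> ('h \<Rightarrow> 'h \<Rightarrow> 'c) \<Rightarrow> bool" where
  "conv_invertible sH DH eH sC mC oneC \<sigma> \<longleftrightarrow>
     bilinear_map sH sH sC \<sigma> \<and>
     (\<exists>\<sigma>'. bilinear_map sH sH sC \<sigma>' \<and>
        (\<forall>h l. sum_list [mC (\<sigma> h1 l1) (\<sigma>' h2 l2). (h1, h2) \<leftarrow> DH h, (l1, l2) \<leftarrow> DH l]
               = sC (eH h * eH l) oneC) \<and>
        (\<forall>h l. sum_list [mC (\<sigma>' h1 l1) (\<sigma> h2 l2). (h1, h2) \<leftarrow> DH h, (l1, l2) \<leftarrow> DH l]
               = sC (eH h * eH l) oneC))"

abbreviation FX :: "('k::field \<Rightarrow> 'c::ab_group_add \<Rightarrow> 'c) \<Rightarrow> ('k \<Rightarrow> 'h::ab_group_add \<Rightarrow> 'h)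
    \<Rightarrow> ('c \<times> 'h \<Rightarrow> 'k) set" where
  "FX sC sH \<equiv> tforms (lforms sC) (lforms sH)"

definition Xmul1 where
  "Xmul1 mC mH DH act \<sigma> \<alpha> \<beta> (m::int) (k::int) p q = (case p of (a, h) \<Rightarrow> case q of (b, g) \<Rightarrow>
     [(mC a (mC (act (zpow \<alpha> m x) (zpow \<beta> (-2) b)) (\<sigma> (zpow \<alpha> (k+1) y) (zpow \<alpha> k u))),
       \<alpha> (mH z v)). (w, z) \<leftarrow> DH h, (x, y) \<leftarrow> DH w, (u, v) \<leftarrow> DH g])"

definition Xmul where
  "Xmul mC mH DH act \<sigma> \<alpha> \<beta> m k xs ys = concat [Xmul1 mC mH DH act \<sigma> \<alpha> \<beta> m k p q. p \<leftarrow> xs, q \<leftarrow> ys]"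

definition Xxi1 :: "('c \<Rightarrow> 'c) \<Rightarrow> ('h \<Rightarrow> 'h) \<Rightarrow> 'c \<times> 'h \<Rightarrow> 'c \<times> 'h" where
  "Xxi1 \<beta> \<alpha> p = (\<beta> (fst p), \<alpha> (snd p))"

definition Xxi :: "('c \<Rightarrow> 'c) \<Rightarrow> ('h \<Rightarrow> 'h) \<Rightarrow> ('c \<times> 'h) list \<Rightarrow> ('c \<times> 'h) list" where
  "Xxi \<beta> \<alpha> xs = map (Xxi1 \<beta> \<alpha>) xs"

definition Xdelta1 where
  "Xdelta1 mH DH DC \<rho> \<alpha> \<beta> (m::int) p = (case p of (a, h) \<Rightarrow>
     [((a1, mH (zpow \<alpha> m c) (inv \<alpha> h1)), (\<beta> c0, h2)).
        (a1, a2) \<leftarrow> DC a, (c, c0) \<leftarrow> \<rho> a2, (h1, h2) \<leftarrow> DH h])"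

definition Xdelta where
  "Xdelta mH DH DC \<rho> \<alpha> \<beta> m xs = concat (map (Xdelta1 mH DH DC \<rho> \<alpha> \<beta> m) xs)"

definition Xeps :: "('c \<Rightarrow> 'k::field) \<Rightarrow> ('h \<Rightarrow> 'k) \<Rightarrow> ('c \<times> 'h) list \<Rightarrow> 'k" where
  "Xeps eC eH xs = sum_list [eC a * eH h. (a, h) \<leftarrow> xs]"

definition X_mhom_bialgebra where
  "X_mhom_bialgebra sC sH mC oneC DC eC \<beta> mH oneH DH eH \<alpha> act \<rho> \<sigma> m k \<longleftrightarrow>
   (let F1 = FX sC sH; F2 = tforms F1 F1; F3 = tforms F1 (tforms F1 F1);
        mul = Xmul mC mH DH act \<sigma> \<alpha> \<beta> m k; mul1 = Xmul1 mC mH DH act \<sigma> \<alpha> \<beta> m k;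
        one = [(oneC, oneH)]; xi = Xxi \<beta> \<alpha>; xi1 = Xxi1 \<beta> \<alpha>; xiinv1 = Xxi1 (inv \<beta>) (inv \<alpha>);
        D = Xdelta mH DH DC \<rho> \<alpha> \<beta> m; D1 = Xdelta1 mH DH DC \<rho> \<alpha> \<beta> m; e = Xeps eC eH in
   \<comment> \<open>monoidal Hom-algebra\<close>
   (\<forall>xs ys zs. teq F1 (mul (xi xs) (mul ys zs)) (mul (mul xs ys) (xi zs))) \<and>
   (\<forall>xs ys. teq F1 (xi (mul xs ys)) (mul (xi xs) (xi ys))) \<and>
   (\<forall>xs. teq F1 (mul xs one) (xi xs) \<and> teq F1 (mul one xs) (xi xs)) \<and>
   teq F1 (xi one) one \<and>
   \<comment> \<open>monoidal Hom-coalgebra\<close>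
   (\<forall>xs. teq F3 [(xiinv1 x, u, v). (x, y) \<leftarrow> D xs, (u, v) \<leftarrow> D1 y]
                 [(u, v, xiinv1 y). (x, y) \<leftarrow> D xs, (u, v) \<leftarrow> D1 x]) \<and>
   (\<forall>xs. teq F2 (D (xi xs)) [(xi1 x, xi1 y). (x, y) \<leftarrow> D xs]) \<and>
   (\<forall>xs. teq F1 [(sC (e [y]) (fst x), snd x). (x, y) \<leftarrow> D xs] (map xiinv1 xs)) \<and>
   (\<forall>xs. teq F1 [(sC (e [x]) (fst y), snd y). (x, y) \<leftarrow> D xs] (map xiinv1 xs)) \<and>
   (\<forall>xs. e (xi xs) = e xs) \<and>
   \<comment> \<open>compatibility\<close>
   (\<forall>xs ys. teq F2 (D (mul xs ys))
       [(p, q). (x1, x2) \<leftarrow> D xs, (y1, y2) \<leftarrow> D ys, p \<leftarrow> mul1 x1 y1, q \<leftarrow> mul1 x2 y2]) \<and>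
   teq F2 (D one) [((oneC, oneH), (oneC, oneH))] \<and>
   (\<forall>xs ys. e (mul xs ys) = e xs * e ys) \<and> e one = 1)"

definition phil1 where
  "phil1 mC mH DH act \<sigma> \<alpha> \<beta> (m::int) (k::int) l p = (case p of (a, h) \<Rightarrow>
     [(mC (act (\<alpha> x) (zpow \<beta> (-1) a)) (\<sigma> (zpow \<alpha> (k+2-m) y) (zpow \<alpha> (k+1) h1)),
       mH (zpow \<alpha> (1-m) z) (\<alpha> h2)). (w, z) \<leftarrow> DH l, (x, y) \<leftarrow> DH w, (h1, h2) \<leftarrow> DH h])"

definition phil where
  "phil mC mH DH act \<sigma> \<alpha> \<beta> m k l xs = concat (map (phil1 mC mH DH act \<sigma> \<alpha> \<beta> m k l) xs)"

definition phir1 where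
  "phir1 mC mH DH \<sigma> \<alpha> (m::int) (k::int) p l = (case p of (a, h) \<Rightarrow>
     [(mC a (\<sigma> (zpow \<alpha> (k+1) h1) (zpow \<alpha> (k+1-m) l1)),
       mH (\<alpha> h2) (zpow \<alpha> (1-m) l2)). (h1, h2) \<leftarrow> DH h, (l1, l2) \<leftarrow> DH l])"

definition phir where
  "phir mC mH DH \<sigma> \<alpha> m k xs l = concat (map (\<lambda>p. phir1 mC mH DH \<sigma> \<alpha> m k p l) xs)"

end

theory Submission
  imports Defs
begin

(* After applying the structure map xi = beta (x) alpha, both actions become multiplications in X
   by the same element 1 (x) alpha^(1-m)(l):
     xi(phi^l(l (x) x)) = (1 (x) alpha^(1-m)(l)) xi(x),   xi(phi^r(x (x) l)) = xi(x) (1 (x) alpha^(1-m)(l)).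
   For phi^l this is a reindexing of the iterated coproducts, using
   Delta(alpha^n h) = alpha^n(h_1) (x) alpha^n(h_2); for phi^r one also needs h -> 1 = eps(h) 1 and the
   counit.  Since xi is injective, the unit conditions then follow from the unit axioms of X and the
   bimodule condition from the Hom-associativity of X. *)

abbreviation linear_form :: "('k::field \<Rightarrow> 'v::ab_group_add \<Rightarrow> 'v) \<Rightarrow> ('v \<Rightarrow> 'k) \<Rightarrow> bool" where
  "linear_form s f \<equiv> Vector_Spaces.linear s (*) f"

lemma vector_space_field_mult: "vector_space ((*) :: 'k::field \<Rightarrow> 'k \<Rightarrow> 'k)"
  by unfold_locales (auto simp: algebra_simps)

lemma linear_form_iff:
  "linear_form s f \<longleftrightarrow> vector_space s \<and> (\<forall>x y. f (x + y) = f x + f y) \<and> (\<forall>c x. f (s c x) = c * f x)"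
  by (simp add: Vector_Spaces.linear_iff vector_space_field_mult)

lemma linear_map_add: "Vector_Spaces.linear s1 s2 f \<Longrightarrow> f (x + y) = f x + f y"
  by (simp add: Vector_Spaces.linear_iff)

lemma linear_map_scale: "Vector_Spaces.linear s1 s2 f \<Longrightarrow> f (s1 c x) = s2 c (f x)"
  by (simp add: Vector_Spaces.linear_iff)

lemma linear_map_sum_list:
  "Vector_Spaces.linear s1 s2 f \<Longrightarrow> f (sum_list (map g xs)) = sum_list (map (\<lambda>x. f (g x)) xs)"
  by (induction xs) (auto simp: linear_map_add dest: linear_map_add[where x = 0 and y = 0])

lemma linear_compose_apply:
  "Vector_Spaces.linear s2 s3 g \<Longrightarrow> Vector_Spaces.linear s1 s2 f \<Longrightarrow>
   Vector_Spaces.linear s1 s3 (\<lambda>x. g (f x))"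
  using Vector_Spaces.linear_compose[of s1 s2 f s3 g] by (simp add: o_def)

lemma linear_identity: "vector_space s \<Longrightarrow> Vector_Spaces.linear s s (\<lambda>x. x)"
  by (simp add: Vector_Spaces.linear_iff)

lemma linear_funpow: "Vector_Spaces.linear s s f \<Longrightarrow> Vector_Spaces.linear s s (f ^^ n)"
  by (induction n) (auto simp: Vector_Spaces.linear_iff)

lemma linear_inv: "Vector_Spaces.linear s s f \<Longrightarrow> bij f \<Longrightarrow> Vector_Spaces.linear s s (inv f)"
  by (metis Vector_Spaces.linear_iff_module_hom module_hom_iff
      module_pair.bij_module_hom_imp_inv_module_hom module_pair.intro)

lemma linear_form_sum_list:
  "vector_space s \<Longrightarrow> (\<And>u v. linear_form s (G u v)) \<Longrightarrow>
   linear_form s (\<lambda>x. sum_list (map (\<lambda>(u, v). G u v x) ps))"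
proof (induction ps)
  case Nil
  then show ?case by (simp add: linear_form_iff)
next
  case (Cons p ps)
  then show ?case
    using linear_map_add[OF Cons.prems(2)] linear_map_scale[OF Cons.prems(2)]
    by (cases p) (simp add: linear_form_iff algebra_simps)
qed

lemma zpow_0 [simp]: "zpow f 0 x = x"
  by (simp add: zpow_def)

lemma zpow_linear:
  "Vector_Spaces.linear s s f \<Longrightarrow> bij f \<Longrightarrow> Vector_Spaces.linear s s (zpow f n)"
  by (simp add: zpow_def linear_funpow linear_inv)

lemma zpow_add1: assumes "bij f" shows "zpow f (n + 1) x = f (zpow f n x)"
proof -
  have f_inv: "f (inv f y) = y" for y
    using assms by (simp add: bij_is_surj surj_f_inv_f)
  consider "0 \<le> n" | "n = -1" | "n < -1" by linarith
  then show ?thesis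
  proof cases
    case 1
    then have "nat (n + 1) = Suc (nat n)" by simp
    with 1 show ?thesis by (simp add: zpow_def)
  next
    case 2
    then show ?thesis by (simp add: zpow_def f_inv)
  next
    case 3
    then have "nat (- n) = Suc (nat (- (n + 1)))" by simp
    with 3 show ?thesis by (simp add: zpow_def f_inv)
  qed
qed

lemma zpow_diff1: "bij f \<Longrightarrow> zpow f (n - 1) x = inv f (zpow f n x)"
  using zpow_add1[of f "n - 1" x] by (simp add: bij_is_inj)

lemma zpow_zpow: assumes "bij f" shows "zpow f a (zpow f b x) = zpow f (a + b) x"
proof (induction a rule: int_induct[where k = 0])
  case (step1 i)
  then show ?case using zpow_add1[OF assms] by (metis add.commute add.left_commute)
next
  case (step2 i)
  then show ?case using zpow_diff1[OF assms] by (metis add.commute add_diff_eq)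
qed simp

lemma zpow_1: "bij f \<Longrightarrow> zpow f 1 x = f x"
  using zpow_add1[of f 0 x] by simp

lemma zpow_apply: "bij f \<Longrightarrow> zpow f n (f x) = zpow f (n + 1) x"
  using zpow_zpow[of f n 1 x] zpow_1[of f x] by simp

lemma zpow_preserves:
  assumes "\<And>y. P y \<Longrightarrow> P (f y)" and "\<And>y. P y \<Longrightarrow> P (inv f y)" and "P x"
  shows "P (zpow f n x)"
proof -
  have "P ((g ^^ i) x)" if "\<And>y. P y \<Longrightarrow> P (g y)" for g i
    by (induction i) (simp_all add: assms(3) that)
  then show ?thesis using assms(1,2) by (simp add: zpow_def)
qed

lemma zpow_fixpoint: "bij f \<Longrightarrow> f c = c \<Longrightarrow> zpow f n c = c"
  by (rule zpow_preserves[where P = "\<lambda>y. y = c"]) (simp_all, metis bij_inv_eq_iff)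

lemma zpow_invariant: "bij f \<Longrightarrow> (\<And>y. e (f y) = e y) \<Longrightarrow> e (zpow f n x) = e x"
  by (rule zpow_preserves[where P = "\<lambda>y. e y = e x"]) (auto, metis bij_inv_eq_iff)

lemma sum_list_map_concat: "sum_list (map f (concat xss)) = sum_list (map (\<lambda>xs. sum_list (map f xs)) xss)"
  by (induction xss) auto

lemmas ev_expand = ev_def sum_list_map_concat map_map o_def prod.case_distrib

lemma teq_sym: "teq F xs ys \<Longrightarrow> teq F ys xs"
  by (simp add: teq_def)

lemma teq_trans [trans]: "teq F xs ys \<Longrightarrow> teq F ys zs \<Longrightarrow> teq F xs zs"
  by (simp add: teq_def)

lemma teq_sum_list_map: "teq F xs ys \<Longrightarrow> g \<in> F \<Longrightarrow> sum_list (map g xs) = sum_list (map g ys)"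
  by (simp add: teq_def ev_def)

lemma teq_concat_map:
  "(\<And>x. teq F (g x) (h x)) \<Longrightarrow> teq F (concat (map g xs)) (concat (map h xs))"
  by (simp add: teq_def ev_expand)

lemma tforms_bilinearI:
  "(\<And>v. linear_form s1 (\<lambda>u. G u v)) \<Longrightarrow> (\<And>u. linear_form s2 (G u)) \<Longrightarrow>
   (\<lambda>(u, v). G u v) \<in> tforms (lforms s1) (lforms s2)"
  unfolding tforms_def lforms_def by auto

lemma tforms_linear_form_fst:
  "f \<in> tforms (lforms s1) (lforms s2) \<Longrightarrow> Vector_Spaces.linear s s1 g \<Longrightarrow>
   linear_form s (\<lambda>x. f (g x, c))"
  unfolding tforms_def lforms_def by (auto intro: linear_compose_apply)

lemma tforms_linear_form_snd:
  "f \<in> tforms (lforms s1) (lforms s2) \<Longrightarrow> Vector_Spaces.linear s s2 g \<Longrightarrow>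
   linear_form s (\<lambda>x. f (c, g x))"
  unfolding tforms_def lforms_def by (auto intro: linear_compose_apply)

lemma tforms_sum_list:
  assumes "vector_space s1" and "vector_space s2"
    and "\<And>q. F q \<in> tforms (lforms s1) (lforms s2)"
  shows "(\<lambda>p. sum_list (map (\<lambda>q. F q p) qs)) \<in> tforms (lforms s1) (lforms s2)"
proof -
  have "linear_form s1 (\<lambda>a. F q (a, b))" "linear_form s2 (\<lambda>b. F q (a, b))" for q a b
    using assms(3)[of q] unfolding tforms_def lforms_def by auto
  note linear = this[THEN linear_map_add] this[THEN linear_map_scale]
  have "linear_form s1 (\<lambda>a. sum_list (map (\<lambda>q. F q (a, b)) qs))" for b
    by (induction qs) (auto simp: linear_form_iff assms(1) linear algebra_simps)
  moreover have "linear_form s2 (\<lambda>b. sum_list (map (\<lambda>q. F q (a, b)) qs))" for a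
    by (induction qs) (auto simp: linear_form_iff assms(2) linear algebra_simps)
  ultimately show ?thesis
    unfolding tforms_def lforms_def by auto
qed

lemma tforms_scale_fst: "f \<in> tforms (lforms s1) (lforms s2) \<Longrightarrow> f (s1 c a, b) = c * f (a, b)"
  unfolding tforms_def lforms_def using linear_map_scale[of s1 "(*)" "\<lambda>a. f (a, b)"] by auto

lemma sum_list_case_prod_const_mult:
  "(\<Sum>(u, v)\<leftarrow>xs. (c::'a::semiring_0) * G u v) = c * (\<Sum>(u, v)\<leftarrow>xs. G u v)"
  by (induction xs) (auto simp: algebra_simps)

lemma teq_sum_list_bilinear:
  "teq (tforms (lforms s1) (lforms s2)) xs ys \<Longrightarrow>
   (\<And>v. linear_form s1 (\<lambda>u. G u v)) \<Longrightarrow> (\<And>u. linear_form s2 (G u)) \<Longrightarrow>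
   sum_list (map (\<lambda>(u, v). G u v) xs) = sum_list (map (\<lambda>(u, v). G u v) ys)"
  using tforms_bilinearI[of s1 G s2] unfolding teq_def ev_def by blast

lemma lin_into_linear_form:
  assumes "lin_into s' (tforms (lforms s1) (lforms s2)) D" and "Vector_Spaces.linear s s' g"
    and "\<And>v. linear_form s1 (\<lambda>u. G u v)" and "\<And>u. linear_form s2 (G u)"
  shows "linear_form s (\<lambda>x. sum_list (map (\<lambda>(u, v). G u v) (D (g x))))"
proof -
  have "linear_form s' (\<lambda>y. ev (\<lambda>(u, v). G u v) (D y))"
    using assms(1) tforms_bilinearI[OF assms(3,4)] unfolding lin_into_def by blast
  from linear_compose_apply[OF this assms(2)] show ?thesis
    by (simp add: ev_def)
qed

lemma bilinear_map_linear_left: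
  "bilinear_map s1 s2 s3 f \<Longrightarrow> Vector_Spaces.linear s s1 g \<Longrightarrow>
   Vector_Spaces.linear s s3 (\<lambda>x. f (g x) c)"
  unfolding bilinear_map_def by (auto intro: linear_compose_apply)

lemma bilinear_map_linear_right:
  "bilinear_map s1 s2 s3 f \<Longrightarrow> Vector_Spaces.linear s s2 g \<Longrightarrow>
   Vector_Spaces.linear s s3 (\<lambda>x. f c (g x))"
  unfolding bilinear_map_def by (auto intro: linear_compose_apply)

locale hom_crossed_product =
  fixes sH :: "'k::field \<Rightarrow> 'h::ab_group_add \<Rightarrow> 'h" and mH :: "'h \<Rightarrow> 'h \<Rightarrow> 'h" and oneH :: 'h
    and DH :: "'h \<Rightarrow> ('h \<times> 'h) list" and eH :: "'h \<Rightarrow> 'k" and \<alpha> :: "'h \<Rightarrow> 'h"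
    and sC :: "'k \<Rightarrow> 'c::ab_group_add \<Rightarrow> 'c" and mC :: "'c \<Rightarrow> 'c \<Rightarrow> 'c" and oneC :: 'c
    and \<beta> :: "'c \<Rightarrow> 'c" and act :: "'h \<Rightarrow> 'c \<Rightarrow> 'c" and \<sigma> :: "'h \<Rightarrow> 'h \<Rightarrow> 'c"
    and m k :: int
  assumes H: "mhom_bialgebra sH mH oneH DH eH \<alpha>"
    and C: "mhom_algebra sC mC oneC \<beta>"
    and action: "weak_hom_module_algebra sH DH eH sC mC oneC act"
    and \<sigma>_bilinear: "bilinear_map sH sH sC \<sigma>"
begin

abbreviation "xmul \<equiv> Xmul mC mH DH act \<sigma> \<alpha> \<beta> m k"
abbreviation "xmul1 \<equiv> Xmul1 mC mH DH act \<sigma> \<alpha> \<beta> m k"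
abbreviation "xi \<equiv> Xxi \<beta> \<alpha>"
abbreviation "\<phi>l \<equiv> phil mC mH DH act \<sigma> \<alpha> \<beta> m k"
abbreviation "\<phi>r \<equiv> phir mC mH DH \<sigma> \<alpha> m k"

lemma H_structure:
  shows vector_space_H: "vector_space sH"
    and mH_bilinear: "bilinear_map sH sH sH mH"
    and \<alpha>_linear: "Vector_Spaces.linear sH sH \<alpha>"
    and \<alpha>_bij: "bij \<alpha>"
    and \<alpha>_one: "\<alpha> oneH = oneH"
    and DH_linear: "lin_into sH (tforms (lforms sH) (lforms sH)) DH"
    and DH_\<alpha>: "teq (tforms (lforms sH) (lforms sH)) (DH (\<alpha> h)) [(\<alpha> x, \<alpha> y). (x, y) \<leftarrow> DH h]"
    and counit_H: "sum_list [sH (eH x) y. (x, y) \<leftarrow> DH h] = inv \<alpha> h"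
    and eH_\<alpha>: "eH (\<alpha> h) = eH h"
  using H by (simp_all add: mhom_bialgebra_def mhom_algebra_def mhom_coalgebra_def)

lemma C_structure:
  shows vector_space_C: "vector_space sC"
    and mC_bilinear: "bilinear_map sC sC sC mC"
    and \<beta>_linear: "Vector_Spaces.linear sC sC \<beta>"
    and \<beta>_bij: "bij \<beta>"
    and \<beta>_one: "\<beta> oneC = oneC"
    and \<beta>_mult: "\<beta> (mC a b) = mC (\<beta> a) (\<beta> b)"
    and mC_one_left: "mC oneC a = \<beta> a"
  using C by (simp_all add: mhom_algebra_def)

lemma mC_scale_left: "mC (sC c a) b = sC c (mC a b)"
  using mC_bilinear linear_map_scale[of sC sC "\<lambda>a. mC a b"] unfolding bilinear_map_def by blast

lemma mC_scale_right: "mC a (sC c b) = sC c (mC a b)"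
  using mC_bilinear linear_map_scale[of sC sC "mC a"] unfolding bilinear_map_def by blast

lemma act_structure:
  shows act_bilinear: "bilinear_map sH sC sC act"
    and act_one: "act h oneC = sC (eH h) oneC"
  using action by (simp_all add: weak_hom_module_algebra_def)

lemmas linear_intros =
  linear_identity[OF vector_space_H] linear_identity[OF vector_space_C]
  bilinear_map_linear_left[OF mH_bilinear] bilinear_map_linear_right[OF mH_bilinear]
  bilinear_map_linear_left[OF mC_bilinear] bilinear_map_linear_right[OF mC_bilinear]
  bilinear_map_linear_left[OF act_bilinear] bilinear_map_linear_right[OF act_bilinear]
  bilinear_map_linear_left[OF \<sigma>_bilinear] bilinear_map_linear_right[OF \<sigma>_bilinear]
  linear_compose_apply[OF \<alpha>_linear] linear_compose_apply[OF \<beta>_linear]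
  linear_compose_apply[OF linear_inv[OF \<alpha>_linear \<alpha>_bij]]
  linear_compose_apply[OF zpow_linear[OF \<alpha>_linear \<alpha>_bij]]
  linear_compose_apply[OF zpow_linear[OF \<beta>_linear \<beta>_bij]]

lemmas linear_form_intros =
  linear_form_sum_list[OF vector_space_H] linear_form_sum_list[OF vector_space_C]
  lin_into_linear_form[OF DH_linear] tforms_linear_form_fst tforms_linear_form_snd

lemma Xmul1_form_left:
  assumes f: "f \<in> FX sC sH"
  shows "(\<lambda>p. ev f (xmul1 p q)) \<in> FX sC sH"
proof -
  have "linear_form sC (\<lambda>a. ev f (xmul1 (a, h) q))" for h
    by (cases q) (simp add: Xmul1_def ev_expand, (intro linear_form_intros linear_intros | rule f)+)
  moreover have "linear_form sH (\<lambda>h. ev f (xmul1 (a, h) q))" for a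
    by (cases q) (simp add: Xmul1_def ev_expand, (intro linear_form_intros linear_intros | rule f)+)
  ultimately show ?thesis
    using tforms_bilinearI[of sC "\<lambda>a h. ev f (xmul1 (a, h) q)" sH] by (simp add: case_prod_beta')
qed

lemma Xmul1_form_right:
  assumes f: "f \<in> FX sC sH"
  shows "(\<lambda>q. ev f (xmul1 p q)) \<in> FX sC sH"
proof -
  have "linear_form sC (\<lambda>b. ev f (xmul1 p (b, g)))" for g
    by (cases p) (simp add: Xmul1_def ev_expand, (intro linear_form_intros linear_intros | rule f)+)
  moreover have "linear_form sH (\<lambda>g. ev f (xmul1 p (b, g)))" for b
    by (cases p) (simp add: Xmul1_def ev_expand, (intro linear_form_intros linear_intros | rule f)+)
  ultimately show ?thesis
    using tforms_bilinearI[of sC "\<lambda>b g. ev f (xmul1 p (b, g))" sH] by (simp add: case_prod_beta')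
qed

lemma ev_Xmul: "ev f (xmul xs ys) = sum_list (map (\<lambda>p. sum_list (map (\<lambda>q. ev f (xmul1 p q)) ys)) xs)"
  by (simp add: Xmul_def ev_expand)

lemma Xmul_cong_left:
  assumes "teq (FX sC sH) xs ys"
  shows "teq (FX sC sH) (xmul xs zs) (xmul ys zs)"
  unfolding teq_def
proof
  fix f assume "f \<in> FX sC sH"
  then have "(\<lambda>p. sum_list (map (\<lambda>q. ev f (xmul1 p q)) zs)) \<in> FX sC sH"
    by (intro tforms_sum_list vector_space_C vector_space_H Xmul1_form_left)
  then show "ev f (xmul xs zs) = ev f (xmul ys zs)"
    unfolding ev_Xmul by (rule teq_sum_list_map[OF assms])
qed

lemma Xmul_cong_right:
  assumes "teq (FX sC sH) xs ys"
  shows "teq (FX sC sH) (xmul zs xs) (xmul zs ys)"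
  unfolding teq_def
proof
  fix f assume "f \<in> FX sC sH"
  then have "(\<lambda>q. sum_list (map (\<lambda>p. ev f (xmul1 p q)) zs)) \<in> FX sC sH"
    by (intro tforms_sum_list vector_space_C vector_space_H Xmul1_form_right)
  moreover have "ev f (xmul zs ws) = sum_list (map (\<lambda>q. sum_list (map (\<lambda>p. ev f (xmul1 p q)) zs)) ws)"
    for ws
    unfolding ev_Xmul by (induction zs) (auto simp: sum_list_addf)
  ultimately show "ev f (xmul zs xs) = ev f (xmul zs ys)"
    using teq_sum_list_map[OF assms] by simp
qed

lemma ev_Xxi: "ev f (xi xs) = ev (\<lambda>(a, h). f (\<beta> a, \<alpha> h)) xs"
  by (simp add: Xxi_def Xxi1_def ev_def o_def split_def)

lemma Xxi_injective:
  assumes "teq (FX sC sH) (xi xs) (xi ys)"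
  shows "teq (FX sC sH) xs ys"
  unfolding teq_def
proof
  fix f assume f: "f \<in> FX sC sH"
  define f' where "f' = (\<lambda>(a, h). f (inv \<beta> a, inv \<alpha> h))"
  have "f' \<in> FX sC sH"
    unfolding f'_def
    by (intro tforms_bilinearI tforms_linear_form_fst[OF f] tforms_linear_form_snd[OF f]
        linear_inv[OF \<alpha>_linear \<alpha>_bij] linear_inv[OF \<beta>_linear \<beta>_bij])
  then have "ev f' (xi xs) = ev f' (xi ys)"
    using assms teq_def by blast
  moreover have "(\<lambda>(a, h). f' (\<beta> a, \<alpha> h)) = f"
    using \<alpha>_bij \<beta>_bij by (auto simp: f'_def bij_is_inj)
  ultimately show "ev f xs = ev f ys"
    unfolding ev_Xxi by simp
qed

lemma DH_\<alpha>_sum: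
  "(\<And>v. linear_form sH (\<lambda>u. G u v)) \<Longrightarrow> (\<And>u. linear_form sH (G u)) \<Longrightarrow>
   sum_list (map (\<lambda>(u, v). G u v) (DH (\<alpha> h))) = sum_list (map (\<lambda>(u, v). G (\<alpha> u) (\<alpha> v)) (DH h))"
  using teq_sum_list_bilinear[OF DH_\<alpha>, of G] by (simp add: map_map o_def prod.case_distrib)

lemma DH_inv_\<alpha>_sum:
  assumes "\<And>v. linear_form sH (\<lambda>u. G u v)" and "\<And>u. linear_form sH (G u)"
  shows "sum_list (map (\<lambda>(u, v). G u v) (DH (inv \<alpha> h))) =
    sum_list (map (\<lambda>(u, v). G (inv \<alpha> u) (inv \<alpha> v)) (DH h))"
proof -
  have inv_\<alpha>: "\<alpha> (inv \<alpha> x) = x" "inv \<alpha> (\<alpha> x) = x" for x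
    using \<alpha>_bij by (simp_all add: bij_is_inj bij_is_surj surj_f_inv_f)
  note inv_\<alpha>_linear = linear_inv[OF \<alpha>_linear \<alpha>_bij]
  from DH_\<alpha>_sum[OF linear_compose_apply[OF assms(1) inv_\<alpha>_linear]
      linear_compose_apply[OF assms(2) inv_\<alpha>_linear], of "inv \<alpha> h"] show ?thesis
    by (simp add: inv_\<alpha>)
qed

lemma DH_zpow_sum:
  assumes "\<And>v. linear_form sH (\<lambda>u. G u v)" and "\<And>u. linear_form sH (G u)"
  shows "sum_list (map (\<lambda>(u, v). G u v) (DH (zpow \<alpha> n h))) =
    sum_list (map (\<lambda>(u, v). G (zpow \<alpha> n u) (zpow \<alpha> n v)) (DH h))"
  using assms
proof (induction n arbitrary: G rule: int_induct[where k = 0])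
  case (step1 i)
  have "linear_form sH (\<lambda>u. G (\<alpha> u) (\<alpha> v))" "linear_form sH (\<lambda>v. G (\<alpha> u) (\<alpha> v))" for u v
    using linear_compose_apply[OF step1.prems(1) \<alpha>_linear]
      linear_compose_apply[OF step1.prems(2) \<alpha>_linear]
    by simp_all
  then show ?case
    unfolding zpow_add1[OF \<alpha>_bij]
    by (simp only: DH_\<alpha>_sum[OF step1.prems] step1.IH[of "\<lambda>u v. G (\<alpha> u) (\<alpha> v)"])
next
  case (step2 i)
  note inv_\<alpha>_linear = linear_inv[OF \<alpha>_linear \<alpha>_bij]
  have "linear_form sH (\<lambda>u. G (inv \<alpha> u) (inv \<alpha> v))" "linear_form sH (\<lambda>v. G (inv \<alpha> u) (inv \<alpha> v))"
    for u v
    using linear_compose_apply[OF step2.prems(1) inv_\<alpha>_linear]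
      linear_compose_apply[OF step2.prems(2) inv_\<alpha>_linear]
    by simp_all
  then show ?case
    unfolding zpow_diff1[OF \<alpha>_bij]
    by (simp only: DH_inv_\<alpha>_sum[OF step2.prems] step2.IH[of "\<lambda>u v. G (inv \<alpha> u) (inv \<alpha> v)"])
qed simp

abbreviation "\<phi>l1 \<equiv> phil1 mC mH DH act \<sigma> \<alpha> \<beta> m k"
abbreviation "\<phi>r1 \<equiv> phir1 mC mH DH \<sigma> \<alpha> m k"

lemma DH_counit_sum:
  "linear_form sH g \<Longrightarrow> sum_list (map (\<lambda>(x, y). eH x * g y) (DH h)) = g (inv \<alpha> h)"
  by (simp add: counit_H[symmetric] linear_map_sum_list linear_map_scale prod.case_distrib)

lemma Xxi_phil1:
  "teq (FX sC sH) (xi (\<phi>l1 l p)) (xmul1 (oneC, zpow \<alpha> (1 - m) l) (Xxi1 \<beta> \<alpha> p))"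
  unfolding teq_def
proof
  fix f assume f: "f \<in> FX sC sH"
  obtain a h where p: "p = (a, h)" by (cases p)
  show "ev f (xi (\<phi>l1 l p)) = ev f (xmul1 (oneC, zpow \<alpha> (1 - m) l) (Xxi1 \<beta> \<alpha> p))"
    unfolding p Xxi1_def fst_conv snd_conv ev_Xxi
    apply (simp add: Xmul1_def phil1_def ev_expand mC_one_left zpow_apply \<alpha>_bij \<beta>_bij)
    apply (subst DH_\<alpha>_sum, (intro linear_form_intros linear_intros | rule f)+)
    apply (subst DH_zpow_sum, (intro linear_form_intros linear_intros | rule f)+)+
    apply (simp add: zpow_zpow \<alpha>_bij zpow_apply zpow_1 add.commute diff_add_eq)
    done
qed

lemma Xxi_phir1:
  "teq (FX sC sH) (xi (\<phi>r1 p l)) (xmul1 (Xxi1 \<beta> \<alpha> p) (oneC, zpow \<alpha> (1 - m) l))"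
  unfolding teq_def
proof
  fix f assume f: "f \<in> FX sC sH"
  obtain a h where p: "p = (a, h)" by (cases p)
  show "ev f (xi (\<phi>r1 p l)) = ev f (xmul1 (Xxi1 \<beta> \<alpha> p) (oneC, zpow \<alpha> (1 - m) l))"
    unfolding p Xxi1_def fst_conv snd_conv ev_Xxi
    apply (simp add: Xmul1_def phir1_def ev_expand zpow_fixpoint[OF \<beta>_bij \<beta>_one] act_one
        zpow_invariant[of \<alpha> eH, OF \<alpha>_bij eH_\<alpha>] mC_scale_left mC_scale_right mC_one_left
        tforms_scale_fst[OF f] sum_list_case_prod_const_mult)
    apply (subst DH_counit_sum, (intro linear_form_intros linear_intros | rule f)+)
    apply (subst DH_\<alpha>_sum, (intro linear_form_intros linear_intros | rule f)+)
    apply (subst DH_zpow_sum, (intro linear_form_intros linear_intros | rule f)+)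
    apply (simp add: zpow_zpow \<alpha>_bij zpow_apply zpow_1 inv_f_f[OF bij_is_inj[OF \<alpha>_bij]] \<beta>_mult
        add.commute diff_add_eq add_diff_eq)
    done
qed

lemma Xxi_phil:
  "teq (FX sC sH) (xi (\<phi>l l xs)) (xmul [(oneC, zpow \<alpha> (1 - m) l)] (xi xs))"
proof -
  have "xi (\<phi>l l xs) = concat (map (\<lambda>p. xi (\<phi>l1 l p)) xs)"
    by (simp add: phil_def Xxi_def map_concat o_def)
  moreover have "xmul [(oneC, zpow \<alpha> (1 - m) l)] (xi xs) =
      concat (map (\<lambda>p. xmul1 (oneC, zpow \<alpha> (1 - m) l) (Xxi1 \<beta> \<alpha> p)) xs)"
    by (simp add: Xmul_def Xxi_def o_def)
  ultimately show ?thesis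
    by (simp add: teq_concat_map Xxi_phil1)
qed

lemma Xxi_phir:
  "teq (FX sC sH) (xi (\<phi>r xs l)) (xmul (xi xs) [(oneC, zpow \<alpha> (1 - m) l)])"
proof -
  have "xi (\<phi>r xs l) = concat (map (\<lambda>p. xi (\<phi>r1 p l)) xs)"
    by (simp add: phir_def Xxi_def map_concat o_def)
  moreover have "xmul (xi xs) [(oneC, zpow \<alpha> (1 - m) l)] =
      concat (map (\<lambda>p. xmul1 (Xxi1 \<beta> \<alpha> p) (oneC, zpow \<alpha> (1 - m) l)) xs)"
    by (simp add: Xmul_def Xxi_def o_def)
  ultimately show ?thesis
    by (simp add: teq_concat_map Xxi_phir1)
qed

lemma Xxi_embed: "xi [(oneC, zpow \<alpha> (1 - m) l)] = [(oneC, zpow \<alpha> (1 - m) (\<alpha> l))]"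
  using zpow_add1[OF \<alpha>_bij, of "1 - m" l] zpow_apply[OF \<alpha>_bij, of "1 - m" l]
  by (simp add: Xxi_def Xxi1_def \<beta>_one)

lemma phil_one:
  assumes "teq (FX sC sH) (xmul [(oneC, oneH)] (xi xs)) (xi (xi xs))"
  shows "teq (FX sC sH) (\<phi>l oneH xs) (xi xs)"
proof (rule Xxi_injective)
  have "teq (FX sC sH) (xi (\<phi>l oneH xs)) (xmul [(oneC, oneH)] (xi xs))"
    using Xxi_phil[of oneH xs] by (simp add: zpow_fixpoint[OF \<alpha>_bij \<alpha>_one])
  also have "teq (FX sC sH) \<dots> (xi (xi xs))"
    by (rule assms)
  finally show "teq (FX sC sH) (xi (\<phi>l oneH xs)) (xi (xi xs))" .
qed

lemma phir_one:
  assumes "teq (FX sC sH) (xmul (xi xs) [(oneC, oneH)]) (xi (xi xs))"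
  shows "teq (FX sC sH) (\<phi>r xs oneH) (xi xs)"
proof (rule Xxi_injective)
  have "teq (FX sC sH) (xi (\<phi>r xs oneH)) (xmul (xi xs) [(oneC, oneH)])"
    using Xxi_phir[of xs oneH] by (simp add: zpow_fixpoint[OF \<alpha>_bij \<alpha>_one])
  also have "teq (FX sC sH) \<dots> (xi (xi xs))"
    by (rule assms)
  finally show "teq (FX sC sH) (xi (\<phi>r xs oneH)) (xi (xi xs))" .
qed

lemma phil_phir_assoc:
  assumes assoc: "\<And>xs ys zs. teq (FX sC sH) (xmul (xi xs) (xmul ys zs)) (xmul (xmul xs ys) (xi zs))"
  shows "teq (FX sC sH) (\<phi>l (\<alpha> l) (\<phi>r xs g)) (\<phi>r (\<phi>l l xs) (\<alpha> g))"
proof (rule Xxi_injective)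
  let ?e = "\<lambda>l. [(oneC, zpow \<alpha> (1 - m) l)]"
  have "teq (FX sC sH) (xi (\<phi>l (\<alpha> l) (\<phi>r xs g))) (xmul (?e (\<alpha> l)) (xi (\<phi>r xs g)))"
    by (rule Xxi_phil)
  also have "teq (FX sC sH) \<dots> (xmul (xi (?e l)) (xmul (xi xs) (?e g)))"
    unfolding Xxi_embed by (rule Xmul_cong_right[OF Xxi_phir])
  also have "teq (FX sC sH) \<dots> (xmul (xmul (?e l) (xi xs)) (xi (?e g)))"
    by (rule assoc)
  also have "teq (FX sC sH) \<dots> (xmul (xi (\<phi>l l xs)) (?e (\<alpha> g)))"
    unfolding Xxi_embed by (rule Xmul_cong_left[OF teq_sym[OF Xxi_phil]])
  also have "teq (FX sC sH) \<dots> (xi (\<phi>r (\<phi>l l xs) (\<alpha> g)))"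
    by (rule teq_sym[OF Xxi_phir])
  finally show "teq (FX sC sH) (xi (\<phi>l (\<alpha> l) (\<phi>r xs g))) (xi (\<phi>r (\<phi>l l xs) (\<alpha> g)))" .
qed

end

theorem lemma4p9:
  fixes sH :: "'k::field \<Rightarrow> 'h::ab_group_add \<Rightarrow> 'h" and mH :: "'h \<Rightarrow> 'h \<Rightarrow> 'h" and oneH :: 'h
    and DH :: "'h \<Rightarrow> ('h \<times> 'h) list" and eH :: "'h \<Rightarrow> 'k" and \<alpha> :: "'h \<Rightarrow> 'h"
    and sC :: "'k \<Rightarrow> 'c::ab_group_add \<Rightarrow> 'c" and mC :: "'c \<Rightarrow> 'c \<Rightarrow> 'c" and oneC :: 'c
    and DC :: "'c \<Rightarrow> ('c \<times> 'c) list" and eC :: "'c \<Rightarrow> 'k" and \<beta> :: "'c \<Rightarrow> 'c"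
    and act :: "'h \<Rightarrow> 'c \<Rightarrow> 'c" and \<rho> :: "'c \<Rightarrow> ('h \<times> 'c) list" and \<sigma> :: "'h \<Rightarrow> 'h \<Rightarrow> 'c"
    and m k :: int
  assumes "mhom_bialgebra sH mH oneH DH eH \<alpha>"
    and "mhom_algebra sC mC oneC \<beta>"
    and "weak_hom_module_algebra sH DH eH sC mC oneC act"
    and "hom_comodule_coalgebra sH mH oneH DH eH \<alpha> sC DC eC \<beta> \<rho>"
    and "conv_invertible sH DH eH sC mC oneC \<sigma>"
    and "X_mhom_bialgebra sC sH mC oneC DC eC \<beta> mH oneH DH eH \<alpha> act \<rho> \<sigma> m k"
  shows "\<forall>xs :: ('c \<times> 'h) list.
           teq (FX sC sH) (phil mC mH DH act \<sigma> \<alpha> \<beta> m k oneH xs) (Xxi \<beta> \<alpha> xs) \<and>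
           teq (FX sC sH) (phir mC mH DH \<sigma> \<alpha> m k xs oneH) (Xxi \<beta> \<alpha> xs) \<and>
           (\<forall>l g. teq (FX sC sH)
              (phil mC mH DH act \<sigma> \<alpha> \<beta> m k (\<alpha> l) (phir mC mH DH \<sigma> \<alpha> m k xs g))
              (phir mC mH DH \<sigma> \<alpha> m k (phil mC mH DH act \<sigma> \<alpha> \<beta> m k l xs) (\<alpha> g)))"
proof -
  interpret hom_crossed_product sH mH oneH DH eH \<alpha> sC mC oneC \<beta> act \<sigma> m k
    using assms(1-3,5) by unfold_locales (simp_all add: conv_invertible_def)
  have "teq (FX sC sH) (xmul (xi xs) (xmul ys zs)) (xmul (xmul xs ys) (xi zs))"
    and "teq (FX sC sH) (xmul [(oneC, oneH)] xs) (xi xs)"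
    and "teq (FX sC sH) (xmul xs [(oneC, oneH)]) (xi xs)" for xs ys zs
    using assms(6) unfolding X_mhom_bialgebra_def Let_def by blast+
  then show ?thesis
    by (blast intro: phil_one phir_one phil_phir_assoc)
qed

end
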